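(* Let $0<\alpha<\beta<1$, let $\theta\in[0,1)$ and $\varphi\in V(\theta)$, and let $\theta_\varepsilon\in[0,1)$ satisfy $\theta_\varepsilon\to\theta$ as $\varepsilon\to0$. Then there exist $\varphi_\varepsilon\in V(\theta_\varepsilon)$ such that $\varphi_\varepsilon\to\varphi$ strongly in $H^1(0,1)$ as $\varepsilon\to0$.
   Context: Let $p$ be a $1$-periodic measurable function on $\mathbb{R}$ with $p>0$ and $p,p^{-1}\in L^\infty(0,1)$. Write $Q=(0,1)$, $Q_1=(0,\alpha)\cup(\beta,1)$. For $\theta\in[0,1)$, $H^1_\theta(Q)=\{u\in H^1(0,1):u(1)=e^{2\pi i\theta}u(0)\}$ (continuous representatives), and $V(\theta)=\{v\in H^1_\theta(Q): p(y)v'(y)=0\text{ for a.e. } y\in Q_1\}$. *)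

theory Defs
  imports "HOL-Analysis.Analysis"
begin

definition Q1 :: "real \<Rightarrow> real \<Rightarrow> real set" where
  "Q1 \<alpha> \<beta> = {0<..<\<alpha>} \<union> {\<beta><..<1}"

text \<open>g is a weak derivative (in L2(0,1)) of u on [0,1], u being the continuous
  representative: u is the integral of g.\<close>
definition H1_deriv :: "(real \<Rightarrow> complex) \<Rightarrow> (real \<Rightarrow> complex) \<Rightarrow> bool" where
  "H1_deriv u g \<longleftrightarrow>
     g \<in> borel_measurable lborel \<and>
     set_integrable lborel {0..1} (\<lambda>x. (cmod (g x))\<^sup>2) \<and>
     (\<forall>x\<in>{0..1}. u x = u 0 + (LINT t:{0..x}|lborel. g t))"

definition H1 :: "(real \<Rightarrow> complex) set" where
  "H1 = {u. \<exists>g. H1_deriv u g}"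

definition H1_theta :: "real \<Rightarrow> (real \<Rightarrow> complex) set" where
  "H1_theta \<theta> = {u \<in> H1. u 1 = exp (2 * pi * \<i> * complex_of_real \<theta>) * u 0}"

definition V :: "(real \<Rightarrow> real) \<Rightarrow> real \<Rightarrow> real \<Rightarrow> real \<Rightarrow> (real \<Rightarrow> complex) set" where
  "V p \<alpha> \<beta> \<theta> = {v \<in> H1_theta \<theta>. \<exists>g. H1_deriv v g \<and>
       (AE y in lborel. y \<in> Q1 \<alpha> \<beta> \<longrightarrow> complex_of_real (p y) * g y = 0)}"

definition H1_tendsto :: "(real \<Rightarrow> real \<Rightarrow> complex) \<Rightarrow> (real \<Rightarrow> complex) \<Rightarrow> bool" where
  "H1_tendsto U u \<longleftrightarrow>
     (\<exists>G g. (\<forall>\<epsilon>>0. H1_deriv (U \<epsilon>) (G \<epsilon>)) \<and> H1_deriv u g \<and>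
        ((\<lambda>\<epsilon>. LINT x:{0..1}|lborel. (cmod (U \<epsilon> x - u x))\<^sup>2 + (cmod (G \<epsilon> x - g x))\<^sup>2)
            \<longlongrightarrow> 0) (at_right 0))"

end

theory Submission imports Defs begin

text \<open>The correction is a multiple of a ramp rising from 0 to 1 across (\<alpha>,\<beta>), the gap between
  the two pieces of Q1. Adding d \<cdot> ramp to \<phi> leaves its derivative on Q1 untouched and changes the
  quasi-periodicity factor from e^{2\<pi>i\<theta>} to e^{2\<pi>i\<theta>'} exactly when
  d = (e^{2\<pi>i\<theta>'} - e^{2\<pi>i\<theta>}) \<phi>(0); the H1 distance of the corrected function from \<phi> is |d| times
  a fixed norm, hence tends to 0 as \<theta>' \<rightarrow> \<theta>.\<close>

lemma set_integrable_const_finite_measure: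
  fixes c :: real
  assumes "A \<in> sets M" "emeasure M A < \<infinity>"
  shows "set_integrable M A (\<lambda>_. c)"
  unfolding set_integrable_def using assms
  by (intro integrable_scaleR_left integrable_real_indicator)

lemma square_integrable_imp_set_integrable:
  fixes g :: "real \<Rightarrow> complex"
  assumes "g \<in> borel_measurable lborel" "set_integrable lborel {a..b} (\<lambda>x. (cmod (g x))\<^sup>2)"
  shows "set_integrable lborel {a..b} g"
proof (rule set_integrable_bound[where f = "\<lambda>x. 1 + (cmod (g x))\<^sup>2"])
  show "set_integrable lborel {a..b} (\<lambda>x. 1 + (cmod (g x))\<^sup>2)"
    using assms(2) by (intro set_integral_add set_integrable_const_finite_measure)
      (auto simp: emeasure_lborel_Icc_eq)
  show "set_borel_measurable lborel {a..b} g"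
    unfolding set_borel_measurable_def using assms(1) by measurable
  have "u \<le> 1 + u\<^sup>2" for u :: real
    using zero_le_power2[of "u - 1/2"] by (simp add: power2_eq_square algebra_simps)
  then show "AE x in lborel. x \<in> {a..b} \<longrightarrow> norm (g x) \<le> norm (1 + (cmod (g x))\<^sup>2)"
    by (intro AE_I2) simp
qed

lemma H1_deriv_set_integrable:
  assumes "H1_deriv u g" "x \<in> {0..1}"
  shows "set_integrable lborel {0..x} g"
proof (rule set_integrable_subset)
  show "set_integrable lborel {0..1} g"
    using assms(1) unfolding H1_deriv_def by (intro square_integrable_imp_set_integrable) auto
qed (use assms(2) in auto)

lemma H1_deriv_add_scaled:
  assumes u: "H1_deriv u g" and v: "H1_deriv v h"
  shows "H1_deriv (\<lambda>x. u x + c * v x) (\<lambda>t. g t + c * h t)"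
  unfolding H1_deriv_def
proof (intro conjI ballI)
  have [measurable]: "g \<in> borel_measurable lborel" "h \<in> borel_measurable lborel"
    using u v unfolding H1_deriv_def by auto
  show "(\<lambda>t. g t + c * h t) \<in> borel_measurable lborel"
    by measurable
  show "set_integrable lborel {0..1} (\<lambda>x. (cmod (g x + c * h x))\<^sup>2)"
  proof (rule set_integrable_bound[where f = "\<lambda>x. 2 * (cmod (g x))\<^sup>2 + 2 * (cmod c)\<^sup>2 * (cmod (h x))\<^sup>2"])
    show "set_integrable lborel {0..1} (\<lambda>x. 2 * (cmod (g x))\<^sup>2 + 2 * (cmod c)\<^sup>2 * (cmod (h x))\<^sup>2)"
      using u v unfolding H1_deriv_def by (intro set_integral_add set_integrable_mult_right) auto
    show "set_borel_measurable lborel {0..1} (\<lambda>x. (cmod (g x + c * h x))\<^sup>2)"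
      unfolding set_borel_measurable_def by measurable
    have "(cmod (y + c * z))\<^sup>2 \<le> 2 * (cmod y)\<^sup>2 + 2 * (cmod c)\<^sup>2 * (cmod z)\<^sup>2" for y z
    proof -
      have "cmod (y + c * z) \<le> cmod y + cmod c * cmod z"
        using norm_triangle_ineq[of y "c * z"] by (simp add: norm_mult)
      then have "(cmod (y + c * z))\<^sup>2 \<le> (cmod y + cmod c * cmod z)\<^sup>2"
        by (simp add: power_mono)
      also have "\<dots> \<le> 2 * (cmod y)\<^sup>2 + 2 * (cmod c)\<^sup>2 * (cmod z)\<^sup>2"
        using zero_le_power2[of "cmod y - cmod c * cmod z"]
        by (simp add: power2_eq_square algebra_simps)
      finally show ?thesis .
    qed
    then show "AE x in lborel. x \<in> {0..1} \<longrightarrow>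
        norm ((cmod (g x + c * h x))\<^sup>2) \<le> norm (2 * (cmod (g x))\<^sup>2 + 2 * (cmod c)\<^sup>2 * (cmod (h x))\<^sup>2)"
      by (intro AE_I2) simp
  qed
  fix x :: real assume x: "x \<in> {0..1}"
  have "(LINT t:{0..x}|lborel. g t + c * h t) = (LINT t:{0..x}|lborel. g t) + c * (LINT t:{0..x}|lborel. h t)"
    using H1_deriv_set_integrable[OF u x] H1_deriv_set_integrable[OF v x] by simp
  moreover have "u x = u 0 + (LINT t:{0..x}|lborel. g t)" "v x = v 0 + (LINT t:{0..x}|lborel. h t)"
    using u v x unfolding H1_deriv_def by blast+
  ultimately show "u x + c * v x = u 0 + c * v 0 + (LINT t:{0..x}|lborel. g t + c * h t)"
    by (simp add: algebra_simps)
qed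

lemma H1_tendsto_add_scaled:
  assumes u: "H1_deriv u g" and v: "H1_deriv v h" and c: "(c \<longlongrightarrow> 0) (at_right 0)"
  shows "H1_tendsto (\<lambda>\<epsilon> x. u x + c \<epsilon> * v x) u"
  unfolding H1_tendsto_def
proof (intro exI conjI allI impI)
  show "H1_deriv (\<lambda>x. u x + c \<epsilon> * v x) (\<lambda>t. g t + c \<epsilon> * h t)" for \<epsilon>
    using u v by (rule H1_deriv_add_scaled)
  define N where "N = (LINT x:{0..1}|lborel. (cmod (v x))\<^sup>2 + (cmod (h x))\<^sup>2)"
  have "(LINT x:{0..1}|lborel. (cmod (u x + c \<epsilon> * v x - u x))\<^sup>2 + (cmod (g x + c \<epsilon> * h x - g x))\<^sup>2)
      = (cmod (c \<epsilon>))\<^sup>2 * N" for \<epsilon>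
  proof -
    have "(LINT x:{0..1}|lborel. (cmod (u x + c \<epsilon> * v x - u x))\<^sup>2 + (cmod (g x + c \<epsilon> * h x - g x))\<^sup>2)
        = (LINT x:{0..1}|lborel. (cmod (c \<epsilon>))\<^sup>2 * ((cmod (v x))\<^sup>2 + (cmod (h x))\<^sup>2))"
      by (simp add: norm_mult power_mult_distrib distrib_left)
    then show ?thesis
      unfolding N_def by simp
  qed
  moreover have "((\<lambda>\<epsilon>. (cmod (c \<epsilon>))\<^sup>2 * N) \<longlongrightarrow> (cmod 0)\<^sup>2 * N) (at_right 0)"
    using c by (intro tendsto_intros)
  ultimately show "((\<lambda>\<epsilon>. LINT x:{0..1}|lborel. (cmod (u x + c \<epsilon> * v x - u x))\<^sup>2
      + (cmod (g x + c \<epsilon> * h x - g x))\<^sup>2) \<longlongrightarrow> 0) (at_right 0)"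
    by simp
qed (use u in simp)

definition bump :: "real \<Rightarrow> real \<Rightarrow> real \<Rightarrow> complex" where
  "bump a b t = complex_of_real (indicator {a..b} t / (b - a))"

definition ramp :: "real \<Rightarrow> real \<Rightarrow> real \<Rightarrow> complex" where
  "ramp a b x = (LINT t:{0..x}|lborel. bump a b t)"

lemma bump_eq_0: "t \<notin> {a..b} \<Longrightarrow> bump a b t = 0"
  by (simp add: bump_def)

lemma ramp_0: "ramp a b 0 = 0"
  unfolding ramp_def set_lebesgue_integral_def
  by (rule integral_eq_zero_AE, rule AE_mp[OF AE_lborel_singleton[of 0]]) auto

lemma ramp_1:
  assumes "0 \<le> a" "a < b" "b \<le> 1"
  shows "ramp a b 1 = 1"
proof -
  have "ramp a b 1 = (LINT t:{a..b}|lborel. complex_of_real (1 / (b - a)))"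
    unfolding ramp_def bump_def set_lebesgue_integral_def using assms
    by (intro Bochner_Integration.integral_cong) (auto split: split_indicator)
  also have "\<dots> = 1"
    using assms by (subst set_integral_const) (auto simp: scaleR_conv_of_real)
  finally show ?thesis .
qed

lemma H1_deriv_ramp:
  assumes "a < b"
  shows "H1_deriv (ramp a b) (bump a b)"
  unfolding H1_deriv_def
proof (intro conjI ballI)
  show "bump a b \<in> borel_measurable lborel"
    unfolding bump_def by measurable
  have "integrable lborel (\<lambda>t. indicator {0..1} t *\<^sub>R (indicator {a..b} t / (b - a)\<^sup>2 :: real))"
    by (intro integrable_mult_indicator integrable_divide integrable_real_indicator)
      (auto simp: emeasure_lborel_Icc_eq)
  moreover have "(cmod (bump a b t))\<^sup>2 = indicator {a..b} t / (b - a)\<^sup>2" for t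
    using assms by (simp add: bump_def norm_divide power_divide flip: of_real_diff split: split_indicator)
  ultimately show "set_integrable lborel {0..1} (\<lambda>x. (cmod (bump a b x))\<^sup>2)"
    unfolding set_integrable_def by simp
qed (simp add: ramp_0 flip: ramp_def)

theorem lemma2p2:
  fixes p :: "real \<Rightarrow> real" and \<alpha> \<beta> \<theta> :: real
    and \<theta>\<epsilon> :: "real \<Rightarrow> real" and \<phi> :: "real \<Rightarrow> complex"
  assumes p_meas: "p \<in> borel_measurable lborel"
    and p_per: "\<And>y. p (y + 1) = p y"
    and p_pos: "\<And>y. p y > 0"
    and p_bdd: "\<exists>M. AE y in lborel. y \<in> {0<..<1} \<longrightarrow> \<bar>p y\<bar> \<le> M"
    and p_inv_bdd: "\<exists>M. AE y in lborel. y \<in> {0<..<1} \<longrightarrow> \<bar>1 / p y\<bar> \<le> M"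
    and \<alpha>\<beta>: "0 < \<alpha>" "\<alpha> < \<beta>" "\<beta> < 1"
    and \<theta>: "0 \<le> \<theta>" "\<theta> < 1"
    and \<phi>: "\<phi> \<in> V p \<alpha> \<beta> \<theta>"
    and \<theta>\<epsilon>_range: "\<And>\<epsilon>. \<epsilon> > 0 \<Longrightarrow> 0 \<le> \<theta>\<epsilon> \<epsilon> \<and> \<theta>\<epsilon> \<epsilon> < 1"
    and \<theta>\<epsilon>_lim: "(\<theta>\<epsilon> \<longlongrightarrow> \<theta>) (at_right 0)"
  shows "\<exists>\<Phi> :: real \<Rightarrow> real \<Rightarrow> complex.
           (\<forall>\<epsilon>>0. \<Phi> \<epsilon> \<in> V p \<alpha> \<beta> (\<theta>\<epsilon> \<epsilon>)) \<and> H1_tendsto \<Phi> \<phi>"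
proof -
  from \<phi> obtain g where g: "H1_deriv \<phi> g"
    and g_Q1: "AE y in lborel. y \<in> Q1 \<alpha> \<beta> \<longrightarrow> complex_of_real (p y) * g y = 0"
    and \<phi>_1: "\<phi> 1 = exp (2 * pi * \<i> * complex_of_real \<theta>) * \<phi> 0"
    unfolding V_def H1_theta_def by blast
  define d where "d \<epsilon> = (exp (2 * pi * \<i> * complex_of_real (\<theta>\<epsilon> \<epsilon>)) - exp (2 * pi * \<i> * complex_of_real \<theta>)) * \<phi> 0" for \<epsilon>
  define \<Phi> where "\<Phi> \<epsilon> x = \<phi> x + d \<epsilon> * ramp \<alpha> \<beta> x" for \<epsilon> x
  have \<Phi>_deriv: "H1_deriv (\<Phi> \<epsilon>) (\<lambda>t. g t + d \<epsilon> * bump \<alpha> \<beta> t)" for \<epsilon>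
    unfolding \<Phi>_def using g H1_deriv_ramp[OF \<alpha>\<beta>(2)] by (rule H1_deriv_add_scaled)
  have \<Phi>_V: "\<Phi> \<epsilon> \<in> V p \<alpha> \<beta> (\<theta>\<epsilon> \<epsilon>)" for \<epsilon>
    unfolding V_def H1_theta_def H1_def
  proof (intro CollectI conjI exI)
    show "\<Phi> \<epsilon> 1 = exp (2 * pi * \<i> * complex_of_real (\<theta>\<epsilon> \<epsilon>)) * \<Phi> \<epsilon> 0"
      unfolding \<Phi>_def d_def using ramp_0 ramp_1[of \<alpha> \<beta>] \<alpha>\<beta> \<phi>_1 by (simp add: algebra_simps)
    have "bump \<alpha> \<beta> y = 0" if "y \<in> Q1 \<alpha> \<beta>" for y
      using that by (intro bump_eq_0) (auto simp: Q1_def)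
    then show "AE y in lborel. y \<in> Q1 \<alpha> \<beta> \<longrightarrow> complex_of_real (p y) * (g y + d \<epsilon> * bump \<alpha> \<beta> y) = 0"
      using g_Q1 by (auto simp: distrib_left)
  qed (fact \<Phi>_deriv)+
  have "(d \<longlongrightarrow> (exp (2 * pi * \<i> * complex_of_real \<theta>) - exp (2 * pi * \<i> * complex_of_real \<theta>)) * \<phi> 0)
      (at_right 0)"
    unfolding d_def by (intro tendsto_intros \<theta>\<epsilon>_lim)
  then have d_lim: "(d \<longlongrightarrow> 0) (at_right 0)"
    by simp
  have "H1_tendsto \<Phi> \<phi>"
    unfolding \<Phi>_def using g H1_deriv_ramp[OF \<alpha>\<beta>(2)] d_lim by (rule H1_tendsto_add_scaled)
  with \<Phi>_V show ?thesis by blast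
qed

end
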